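(* Let $X,Y$ be Banach spaces and let $-A$ be the generator of a bounded strongly continuous semigroup $(T(t))_{t\ge0}$ on $X$; assume $A$ is injective and has dense range. Let $C:\mathcal D(A)\to Y$ be bounded (for the graph norm). Suppose there exist $\beta\in(0,1)$ and constants $K,\delta>0$ such that (SQ$_\beta$) $\|x\|^2\le K^2\int_0^\infty\|(tA)^{-\beta}(T(2t^{2\beta})-T(t^{2\beta}))x\|^2\,\frac{dt}{t}$ for all $x\in X$, and (R$_\beta$) $\|CA^{-(1-\beta)}x\|_Y\ge\delta\|x\|$ for all $x\in\mathcal D(A)\cap\mathcal R(A)$ (understood as $\|CA^{-1}x\|_Y\ge\delta\|A^{-\beta}x\|$). Then there exists a constant $m>0$ such that $m^2\|x\|^2\le\int_0^\infty\|CT(t)x\|_Y^2\,dt$ for all $x\in\mathcal D(A)\cap\mathcal R(A)$.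
   Context: $\mathcal D(A)$, $\mathcal R(A)$ denote domain and range of $A$. Since $-A$ generates a bounded semigroup, $A$ is sectorial and, being injective, has fractional powers $A^{-\gamma}$ ($\gamma\in(0,1]$), the inverses of the fractional powers $A^{\gamma}$; $(tA)^{-\beta}=t^{-\beta}A^{-\beta}$. *)

theory Defs
  imports "HOL-Analysis.Analysis"
begin

definition C0_semigroup :: "(real \<Rightarrow> 'a::banach \<Rightarrow> 'a) \<Rightarrow> bool" where
  "C0_semigroup T \<longleftrightarrow>
     (\<forall>t\<ge>0. bounded_linear (T t)) \<and>
     T 0 = id \<and>
     (\<forall>s t. 0 \<le> s \<longrightarrow> 0 \<le> t \<longrightarrow> T (s + t) = T s \<circ> T t) \<and>
     (\<forall>x. continuous_on {0..} (\<lambda>t. T t x))"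

definition bounded_semigroup :: "(real \<Rightarrow> 'a::banach \<Rightarrow> 'a) \<Rightarrow> bool" where
  "bounded_semigroup T \<longleftrightarrow> C0_semigroup T \<and> (\<exists>M. \<forall>t\<ge>0. onorm (T t) \<le> M)"

definition is_generator :: "(real \<Rightarrow> 'a::banach \<Rightarrow> 'a) \<Rightarrow> 'a set \<Rightarrow> ('a \<Rightarrow> 'a) \<Rightarrow> bool" where
  "is_generator T D G \<longleftrightarrow>
     D = {x. \<exists>y. ((\<lambda>h. (1 / h) *\<^sub>R (T h x - x)) \<longlongrightarrow> y) (at_right 0)} \<and>
     (\<forall>x\<in>D. ((\<lambda>h. (1 / h) *\<^sub>R (T h x - x)) \<longlongrightarrow> G x) (at_right 0))"

text \<open>Negative fractional power A^(-beta) of A, where -A generates the bounded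
  semigroup T, via the standard formula
  A^(-beta) y = 1/Gamma(beta) * int_0^infty t^(beta-1) T(t) y dt
  (improper integral at infinity; valid in particular on the range of A).\<close>
definition frac_neg_pow :: "(real \<Rightarrow> 'a::banach \<Rightarrow> 'a) \<Rightarrow> real \<Rightarrow> 'a \<Rightarrow> 'a" where
  "frac_neg_pow T \<beta> y =
     (1 / Gamma \<beta>) *\<^sub>R
       Lim at_top (\<lambda>R::real. integral {0..R} (\<lambda>t. (t powr (\<beta> - 1)) *\<^sub>R T t y))"

definition graph_bounded :: "'a::banach set \<Rightarrow> ('a \<Rightarrow> 'a) \<Rightarrow> ('a \<Rightarrow> 'b::banach) \<Rightarrow> bool" where
  "graph_bounded D A C \<longleftrightarrow>
     (\<forall>x\<in>D. \<forall>y\<in>D. \<forall>a b. C (a *\<^sub>R x + b *\<^sub>R y) = a *\<^sub>R C x + b *\<^sub>R C y) \<and>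
     (\<exists>c. \<forall>x\<in>D. norm (C x) \<le> c * (norm x + norm (A x)))"

end

(*
  For x in D(A) and 0 < a <= b, the vector w = integral of T(r) x over [a, b] lies in D(A) with
  A w = T(a) x - T(b) x. Since C is bounded for the graph norm and r |-> T(r) x is continuous for
  it, C commutes with this integral, so (R_beta) gives
    delta * |A^(-beta) (T(2s) x - T(s) x)| <= |C w| <= integral of |C T(r) x| over [s, 2s].
  With s = t^(2 beta) and Cauchy-Schwarz, the integrand of (SQ_beta) at t is at most
  1/(delta^2 t) times the integral of |C T(r) x|^2 over [t^(2 beta), 2 t^(2 beta)], and by Tonelli
  these window averages integrate over t > 0 to at most (2^(1/(2 beta)) - 1) times the output
  energy of x.
*)

theory Submission
  imports Defs
begin

definition linear_on :: "'a::real_vector set \<Rightarrow> ('a \<Rightarrow> 'b::real_vector) \<Rightarrow> bool" where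
  "linear_on D f \<longleftrightarrow> (\<forall>x\<in>D. \<forall>y\<in>D. \<forall>a b. f (a *\<^sub>R x + b *\<^sub>R y) = a *\<^sub>R f x + b *\<^sub>R f y)"

lemma linear_on_diff: "linear_on D f \<Longrightarrow> x \<in> D \<Longrightarrow> y \<in> D \<Longrightarrow> f (x - y) = f x - f y"
  unfolding linear_on_def by (metis scaleR_minus1_left scaleR_one diff_conv_add_uminus)

lemma linear_on_scaleR: "linear_on D f \<Longrightarrow> x \<in> D \<Longrightarrow> f (c *\<^sub>R x) = c *\<^sub>R f x"
  unfolding linear_on_def by (metis add.right_neutral scaleR_zero_left)

lemma graph_boundedE:
  assumes "graph_bounded D A C"
  obtains c where "linear_on D C" "\<And>x. x \<in> D \<Longrightarrow> norm (C x) \<le> c * (norm x + norm (A x))"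
  using assms unfolding graph_bounded_def linear_on_def by blast

lemma graph_bounded_linear_on: "graph_bounded D A C \<Longrightarrow> linear_on D C"
  by (erule graph_boundedE)

section \<open>Difference quotients, Cauchy-Schwarz and window averages\<close>

lemma eventually_at_right_0_less: "0 < c \<Longrightarrow> eventually (\<lambda>h::real. 0 < h \<and> h < c) (at_right 0)"
  by (simp add: eventually_at_right_less eventually_conj eventually_at_right_field) metis

lemma has_vector_derivative_iff_quotient:
  fixes f :: "real \<Rightarrow> 'a::real_normed_vector"
  shows "(f has_vector_derivative f') (at x within S) \<longleftrightarrow>
    ((\<lambda>y. (1 / (y - x)) *\<^sub>R (f y - f x)) \<longlongrightarrow> f') (at x within S)"
proof -
  have "((\<lambda>y. norm (f y - f x - (y - x) *\<^sub>R f') / norm (y - x)) \<longlongrightarrow> 0) (at x within S)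
      \<longleftrightarrow> ((\<lambda>y. (1 / (y - x)) *\<^sub>R (f y - f x) - f') \<longlongrightarrow> 0) (at x within S)"
  proof (subst tendsto_norm_zero_iff[symmetric], rule Lim_cong_within)
    fix y assume "y \<noteq> x"
    then have "(1 / (y - x)) *\<^sub>R (f y - f x) - f' = (1 / (y - x)) *\<^sub>R (f y - f x - (y - x) *\<^sub>R f')"
      by (simp add: scaleR_diff_right)
    then show "norm (f y - f x - (y - x) *\<^sub>R f') / norm (y - x) = norm ((1 / (y - x)) *\<^sub>R (f y - f x) - f')"
      by (simp add: divide_inverse mult.commute)
  qed simp_all
  then show ?thesis
    by (simp add: has_vector_derivative_def has_derivative_iff_norm bounded_linear_scaleR_left
        LIM_zero_iff)
qed

lemma has_vector_derivative_right_quotient: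
  fixes f :: "real \<Rightarrow> 'a::real_normed_vector"
  assumes "(f has_vector_derivative f') (at x within S)"
    and "eventually (\<lambda>h. x + h \<in> S) (at_right 0)"
  shows "((\<lambda>h. (1 / h) *\<^sub>R (f (x + h) - f x)) \<longlongrightarrow> f') (at_right 0)"
proof -
  have "filterlim (\<lambda>h. x + h) (at x within S) (at_right 0)"
    unfolding filterlim_at
  proof
    show "\<forall>\<^sub>F h in at_right 0. x + h \<in> S \<and> x + h \<noteq> x"
      using assms(2) eventually_at_right_0_less[OF zero_less_one] by eventually_elim auto
    show "((\<lambda>h. x + h) \<longlongrightarrow> x) (at_right 0)" by (auto intro!: tendsto_eq_intros)
  qed
  from filterlim_compose[OF assms(1)[unfolded has_vector_derivative_iff_quotient] this]
  show ?thesis by simp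
qed

lemma integral_squared_le:
  fixes h :: "real \<Rightarrow> real"
  assumes h: "continuous_on {a..b} h" and ab: "a < b"
  shows "(integral {a..b} h)\<^sup>2 \<le> (b - a) * integral {a..b} (\<lambda>r. (h r)\<^sup>2)"
proof -
  define J where "J = integral {a..b} h"
  define I where "I = integral {a..b} (\<lambda>r. (h r)\<^sup>2)"
  define m where "m = J / (b - a)"
  have J: "(h has_integral J) {a..b}" and I: "((\<lambda>r. (h r)\<^sup>2) has_integral I) {a..b}"
    unfolding J_def I_def by (intro integrable_integral integrable_continuous_real continuous_intros h)+
  have "((\<lambda>r. (h r)\<^sup>2 - 2 * m * h r + m\<^sup>2) has_integral I - 2 * m * J + (b - a) * m\<^sup>2) {a..b}"
    using ab by (intro has_integral_add has_integral_diff has_integral_mult_right I J)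
      (use has_integral_const_real[of "m\<^sup>2" a b] in simp)
  then have "0 \<le> I - 2 * m * J + (b - a) * m\<^sup>2"
  proof (rule has_integral_nonneg)
    show "0 \<le> (h r)\<^sup>2 - 2 * m * h r + m\<^sup>2" for r
      using zero_le_power2[of "h r - m"] by (simp add: power2_diff algebra_simps)
  qed
  also have "\<dots> = I - J\<^sup>2 / (b - a)"
    using ab unfolding m_def by (simp add: power2_eq_square)
  finally show ?thesis using ab by (simp add: J_def I_def field_simps)
qed

definition window :: "real \<Rightarrow> real \<Rightarrow> (real \<times> real) set" where
  "window p q = {(t, r). 0 < t \<and> t powr p \<le> r \<and> r \<le> q * t powr p}"

lemma window_measurable[measurable]: "window p q \<in> sets (lborel \<Otimes>\<^sub>M lborel)"
proof -
  have "{x \<in> space (lborel \<Otimes>\<^sub>M lborel). 0 < fst x \<and> fst x powr p \<le> snd x \<and> snd x \<le> q * fst x powr p}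
      \<in> sets (lborel \<Otimes>\<^sub>M lborel)"
    by measurable
  then show ?thesis by (simp add: window_def space_pair_measure case_prod_unfold)
qed

lemma nn_integral_window_section_le:
  assumes p: "p > 0" and q: "q \<ge> 1"
  shows "(\<integral>\<^sup>+ t. ennreal (1 / t) * indicator (window p q) (t, r) \<partial>lborel) \<le> ennreal (q powr (1 / p) - 1)"
proof (cases "r > 0")
  case False
  have "(t, r) \<notin> window p q" for t
  proof
    assume "(t, r) \<in> window p q"
    then have "0 < t powr p" "t powr p \<le> r" by (auto simp: window_def)
    with False show False by simp
  qed
  then show ?thesis by simp
next
  case True
  define \<alpha> where "\<alpha> = (r / q) powr (1 / p)"
  define \<gamma> where "\<gamma> = r powr (1 / p)"
  have \<alpha>: "\<alpha> > 0" using True q by (simp add: \<alpha>_def)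
  have "\<gamma> / \<alpha> = q powr (1 / p)"
    using True q by (simp add: \<alpha>_def \<gamma>_def powr_divide)
  then have ratio: "(\<gamma> - \<alpha>) / \<alpha> = q powr (1 / p) - 1"
    using \<alpha> by (simp add: diff_divide_distrib)
  have "\<alpha> \<le> \<gamma>"
    unfolding \<alpha>_def \<gamma>_def using True q p by (intro powr_mono2) (auto simp: field_simps)
  have bounds: "\<alpha> \<le> t \<and> t \<le> \<gamma>" if "(t, r) \<in> window p q" for t
  proof -
    from that have t: "t > 0" and "t powr p \<le> r" "r / q \<le> t powr p"
      using q by (auto simp: window_def field_simps)
    then have "(t powr p) powr (1 / p) \<le> r powr (1 / p)" "(r / q) powr (1 / p) \<le> (t powr p) powr (1 / p)"
      using p True q by (auto intro!: powr_mono2)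
    then show ?thesis using t p by (simp add: \<alpha>_def \<gamma>_def powr_powr)
  qed
  have "(\<integral>\<^sup>+ t. ennreal (1 / t) * indicator (window p q) (t, r) \<partial>lborel)
      \<le> (\<integral>\<^sup>+ t. ennreal (1 / \<alpha>) * indicator {\<alpha>..\<gamma>} t \<partial>lborel)"
    using bounds \<alpha> by (intro nn_integral_mono) (auto simp: indicator_def frac_le)
  also have "\<dots> = ennreal (1 / \<alpha>) * ennreal (\<gamma> - \<alpha>)"
    using \<open>\<alpha> \<le> \<gamma>\<close> by (simp add: nn_integral_cmult_indicator)
  also have "\<dots> = ennreal (q powr (1 / p) - 1)"
    using \<alpha> ratio by (simp add: ennreal_mult'[symmetric])
  finally show ?thesis .
qed

lemma nn_integral_window_average_le:
  fixes f :: "real \<Rightarrow> ennreal"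
  assumes f[measurable]: "f \<in> borel_measurable borel" and p: "p > 0" and q: "q \<ge> 1"
  shows "(\<integral>\<^sup>+ t\<in>{0<..}. ennreal (1 / t) * (\<integral>\<^sup>+ r\<in>{t powr p..q * t powr p}. f r \<partial>lborel) \<partial>lborel)
    \<le> ennreal (q powr (1 / p) - 1) * (\<integral>\<^sup>+ r. f r \<partial>lborel)"
proof -
  let ?K = "\<lambda>t r. ennreal (1 / t) * indicator (window p q) (t, r)"
  have "(\<integral>\<^sup>+ t\<in>{0<..}. ennreal (1 / t) * (\<integral>\<^sup>+ r\<in>{t powr p..q * t powr p}. f r \<partial>lborel) \<partial>lborel)
      = (\<integral>\<^sup>+ t. (\<integral>\<^sup>+ r. ?K t r * f r \<partial>lborel) \<partial>lborel)"
  proof (rule nn_integral_cong)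
    fix t :: real
    have "indicator (window p q) (t, r) = (indicator {0<..} t * indicator {t powr p..q * t powr p} r :: ennreal)"
      for r by (simp add: window_def indicator_def)
    then show "ennreal (1 / t) * (\<integral>\<^sup>+ r\<in>{t powr p..q * t powr p}. f r \<partial>lborel) * indicator {0<..} t
        = (\<integral>\<^sup>+ r. ?K t r * f r \<partial>lborel)"
      by (simp add: nn_integral_cmult[symmetric] nn_integral_multc[symmetric] ac_simps)
  qed
  also have "\<dots> = (\<integral>\<^sup>+ r. (\<integral>\<^sup>+ t. ?K t r * f r \<partial>lborel) \<partial>lborel)"
    by (rule lborel_pair.Fubini'[symmetric]) measurable
  also have "\<dots> = (\<integral>\<^sup>+ r. (\<integral>\<^sup>+ t. ?K t r \<partial>lborel) * f r \<partial>lborel)"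
    by (intro nn_integral_cong nn_integral_multc) measurable
  also have "\<dots> \<le> (\<integral>\<^sup>+ r. ennreal (q powr (1 / p) - 1) * f r \<partial>lborel)"
    by (intro nn_integral_mono mult_right_mono nn_integral_window_section_le p q) simp
  also have "\<dots> = ennreal (q powr (1 / p) - 1) * (\<integral>\<^sup>+ r. f r \<partial>lborel)"
    by (rule nn_integral_cmult) measurable
  finally show ?thesis .
qed

section \<open>Bounded semigroups and their generators\<close>

lemma bounded_semigroup_linear: "bounded_semigroup T \<Longrightarrow> t \<ge> 0 \<Longrightarrow> bounded_linear (T t)"
  unfolding bounded_semigroup_def C0_semigroup_def by blast

lemma bounded_semigroup_add:
  "bounded_semigroup T \<Longrightarrow> 0 \<le> s \<Longrightarrow> 0 \<le> t \<Longrightarrow> T (s + t) x = T s (T t x)"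
  unfolding bounded_semigroup_def C0_semigroup_def by simp

lemma bounded_semigroup_commute:
  "bounded_semigroup T \<Longrightarrow> 0 \<le> s \<Longrightarrow> 0 \<le> t \<Longrightarrow> T s (T t x) = T t (T s x)"
  by (metis add.commute bounded_semigroup_add)

lemma bounded_semigroup_continuous: "bounded_semigroup T \<Longrightarrow> continuous_on {0..} (\<lambda>t. T t x)"
  unfolding bounded_semigroup_def C0_semigroup_def by blast

lemma bounded_semigroup_norm_bound:
  assumes "bounded_semigroup T"
  obtains M where "\<And>t v. t \<ge> 0 \<Longrightarrow> norm (T t v) \<le> M * norm v"
proof -
  from assms obtain M where M: "\<forall>t\<ge>0. onorm (T t) \<le> M"
    unfolding bounded_semigroup_def by auto
  show thesis
  proof (rule that)
    fix t v assume t: "(t::real) \<ge> 0"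
    have "norm (T t v) \<le> onorm (T t) * norm v"
      by (rule onorm[OF bounded_semigroup_linear[OF assms t]])
    also have "\<dots> \<le> M * norm v" using M t by (intro mult_right_mono) auto
    finally show "norm (T t v) \<le> M * norm v" .
  qed
qed

lemma bounded_semigroup_tendsto:
  assumes sg: "bounded_semigroup T"
    and v: "(f \<longlongrightarrow> v) F" and t: "(g \<longlongrightarrow> t) F" "t \<ge> 0" "eventually (\<lambda>h. g h \<ge> 0) F"
  shows "((\<lambda>h. T (g h) (f h)) \<longlongrightarrow> T t v) F"
proof -
  obtain M where M: "\<And>t w. t \<ge> 0 \<Longrightarrow> norm (T t w) \<le> M * norm w"
    using bounded_semigroup_norm_bound[OF sg] by blast
  have "((\<lambda>h. T (g h) v) \<longlongrightarrow> T t v) F"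
    using continuous_on_tendsto_compose[OF bounded_semigroup_continuous[OF sg] t(1)] t(2,3)
    by simp
  moreover have "((\<lambda>h. T (g h) (f h - v)) \<longlongrightarrow> 0) F"
  proof (rule tendsto_0_le[where K = M])
    show "((\<lambda>h. f h - v) \<longlongrightarrow> 0) F" using v by (rule LIM_zero)
    show "\<forall>\<^sub>F h in F. norm (T (g h) (f h - v)) \<le> norm (f h - v) * M"
      using t(3) by eventually_elim (simp add: M mult.commute)
  qed
  ultimately have "((\<lambda>h. T (g h) v + T (g h) (f h - v)) \<longlongrightarrow> T t v + 0) F"
    by (rule tendsto_add)
  moreover have "eventually (\<lambda>h. T (g h) v + T (g h) (f h - v) = T (g h) (f h)) F"
    using t(3) by eventually_elim (simp add: bounded_semigroup_linear[OF sg] linear_simps)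
  ultimately show ?thesis by (simp add: Lim_transform_eventually)
qed

lemma is_generator_tendsto:
  "is_generator T D G \<Longrightarrow> x \<in> D \<Longrightarrow> ((\<lambda>h. (1 / h) *\<^sub>R (T h x - x)) \<longlongrightarrow> G x) (at_right 0)"
  unfolding is_generator_def by blast

lemma is_generator_domainI:
  assumes gen: "is_generator T D (\<lambda>x. - A x)"
    and lim: "((\<lambda>h. (1 / h) *\<^sub>R (T h x - x)) \<longlongrightarrow> y) (at_right 0)"
  shows "x \<in> D" "A x = - y"
proof -
  show x: "x \<in> D" using assms unfolding is_generator_def by auto
  from tendsto_unique[OF _ is_generator_tendsto[OF gen x] lim] show "A x = - y" by auto
qed

lemma is_generator_linear:
  assumes sg: "bounded_semigroup T" and gen: "is_generator T D (\<lambda>x. - A x)"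
  shows "subspace D" "linear_on D A"
proof -
  have lincomb: "a *\<^sub>R x + b *\<^sub>R y \<in> D \<and> A (a *\<^sub>R x + b *\<^sub>R y) = a *\<^sub>R A x + b *\<^sub>R A y"
    if "x \<in> D" "y \<in> D" for a b x y
  proof -
    have "((\<lambda>h. a *\<^sub>R ((1 / h) *\<^sub>R (T h x - x)) + b *\<^sub>R ((1 / h) *\<^sub>R (T h y - y)))
        \<longlongrightarrow> a *\<^sub>R (- A x) + b *\<^sub>R (- A y)) (at_right 0)"
      by (intro tendsto_intros is_generator_tendsto[OF gen] that)
    moreover have "eventually (\<lambda>h. a *\<^sub>R ((1 / h) *\<^sub>R (T h x - x)) + b *\<^sub>R ((1 / h) *\<^sub>R (T h y - y))
        = (1 / h) *\<^sub>R (T h (a *\<^sub>R x + b *\<^sub>R y) - (a *\<^sub>R x + b *\<^sub>R y))) (at_right 0)"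
      using eventually_at_right_0_less[OF zero_less_one]
    proof eventually_elim
      case (elim h)
      then interpret bounded_linear "T h" using bounded_semigroup_linear[OF sg] by simp
      show ?case by (simp add: add scale algebra_simps)
    qed
    ultimately have "((\<lambda>h. (1 / h) *\<^sub>R (T h (a *\<^sub>R x + b *\<^sub>R y) - (a *\<^sub>R x + b *\<^sub>R y)))
        \<longlongrightarrow> a *\<^sub>R (- A x) + b *\<^sub>R (- A y)) (at_right 0)"
      by (rule Lim_transform_eventually)
    from is_generator_domainI[OF gen this] show ?thesis by simp
  qed
  have "0 \<in> D"
  proof (rule is_generator_domainI(1)[OF gen], rule tendsto_eventually)
    show "\<forall>\<^sub>F h in at_right 0. (1 / h) *\<^sub>R (T h 0 - 0) = 0"
      using eventually_at_right_0_less[OF zero_less_one]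
      by eventually_elim (simp add: linear_simps bounded_semigroup_linear[OF sg])
  qed
  then show "subspace D"
    using lincomb[of _ _ 1 1] lincomb[of _ _ _ 0] by (auto simp: subspace_def)
  show "linear_on D A" unfolding linear_on_def using lincomb by blast
qed

lemma is_generator_semigroup:
  assumes sg: "bounded_semigroup T" and gen: "is_generator T D (\<lambda>x. - A x)"
    and x: "x \<in> D" and t: "t \<ge> 0"
  shows "T t x \<in> D" "A (T t x) = T t (A x)"
proof -
  have "((\<lambda>h. T t ((1 / h) *\<^sub>R (T h x - x))) \<longlongrightarrow> T t (- A x)) (at_right 0)"
    by (rule bounded_semigroup_tendsto[OF sg is_generator_tendsto[OF gen x] tendsto_const t]) (use t in simp)
  moreover have "eventually (\<lambda>h. T t ((1 / h) *\<^sub>R (T h x - x))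
      = (1 / h) *\<^sub>R (T h (T t x) - T t x)) (at_right 0)"
    using eventually_at_right_0_less[OF zero_less_one]
    by eventually_elim (use t in \<open>simp add: bounded_semigroup_linear[OF sg] linear_simps
        bounded_semigroup_commute[OF sg]\<close>)
  ultimately have lim: "((\<lambda>h. (1 / h) *\<^sub>R (T h (T t x) - T t x)) \<longlongrightarrow> T t (- A x)) (at_right 0)"
    by (rule Lim_transform_eventually)
  show "T t x \<in> D" "A (T t x) = T t (A x)"
    using is_generator_domainI[OF gen lim] by (simp_all add: bounded_semigroup_linear[OF sg t] linear_simps)
qed

lemma bounded_semigroup_right_quotient:
  assumes sg: "bounded_semigroup T" and gen: "is_generator T D (\<lambda>x. - A x)"
    and x: "x \<in> D" and u: "u \<ge> 0"
  shows "((\<lambda>h. (1 / h) *\<^sub>R (T (u + h) x - T u x)) \<longlongrightarrow> - T u (A x)) (at_right 0)"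
proof -
  have "((\<lambda>h. T u ((1 / h) *\<^sub>R (T h x - x))) \<longlongrightarrow> T u (- A x)) (at_right 0)"
    by (rule bounded_semigroup_tendsto[OF sg is_generator_tendsto[OF gen x] tendsto_const])
      (use u in auto)
  moreover have "eventually (\<lambda>h. T u ((1 / h) *\<^sub>R (T h x - x))
      = (1 / h) *\<^sub>R (T (u + h) x - T u x)) (at_right 0)"
    using eventually_at_right_0_less[OF zero_less_one]
    by eventually_elim (use u in \<open>simp add: bounded_semigroup_linear[OF sg] linear_simps
        bounded_semigroup_add[OF sg] bounded_semigroup_commute[OF sg]\<close>)
  ultimately show ?thesis
    using bounded_semigroup_linear[OF sg u] by (simp add: linear_simps Lim_transform_eventually)
qed

lemma bounded_semigroup_left_quotient:
  assumes sg: "bounded_semigroup T" and gen: "is_generator T D (\<lambda>x. - A x)"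
    and x: "x \<in> D" and u: "u > 0"
  shows "((\<lambda>h. (1 / - h) *\<^sub>R (T (u + - h) x - T u x)) \<longlongrightarrow> - T u (A x)) (at_right 0)"
proof -
  have "((\<lambda>h. T (u - h) ((1 / h) *\<^sub>R (T h x - x))) \<longlongrightarrow> T u (- A x)) (at_right 0)"
  proof (rule bounded_semigroup_tendsto[OF sg is_generator_tendsto[OF gen x]])
    show "((\<lambda>h. u - h) \<longlongrightarrow> u) (at_right 0)" by (auto intro!: tendsto_eq_intros)
    show "\<forall>\<^sub>F h in at_right 0. 0 \<le> u - h"
      using eventually_at_right_0_less[OF u] by eventually_elim simp
  qed (use u in simp)
  moreover have "eventually (\<lambda>h. T (u - h) ((1 / h) *\<^sub>R (T h x - x))
      = (1 / - h) *\<^sub>R (T (u + - h) x - T u x)) (at_right 0)"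
    using eventually_at_right_0_less[OF u]
  proof eventually_elim
    case (elim h)
    then have "T u x = T (u - h) (T h x)" using bounded_semigroup_add[OF sg, of "u - h" h] by simp
    then show ?case
      using elim by (simp add: bounded_semigroup_linear[OF sg] linear_simps algebra_simps)
  qed
  ultimately show ?thesis
    using bounded_semigroup_linear[OF sg] u by (simp add: linear_simps Lim_transform_eventually)
qed

lemma bounded_semigroup_has_vector_derivative:
  assumes sg: "bounded_semigroup T" and gen: "is_generator T D (\<lambda>x. - A x)"
    and x: "x \<in> D" and u: "u > 0"
  shows "((\<lambda>v. T v x) has_vector_derivative - T u (A x)) (at u)"
proof -
  have "((\<lambda>h. (1 / (u + h - u)) *\<^sub>R (T (u + h) x - T u x)) \<longlongrightarrow> - T u (A x)) (at 0)"
    unfolding filterlim_at_split filterlim_at_left_to_right[of _ _ 0]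
    using bounded_semigroup_left_quotient[OF sg gen x u]
      bounded_semigroup_right_quotient[OF sg gen x] u by simp
  then show ?thesis
    unfolding has_vector_derivative_iff_quotient by (rule LIM_offset_zero_cancel)
qed

lemma bounded_semigroup_integral_shift:
  assumes sg: "bounded_semigroup T" and ab: "0 \<le> a" "a \<le> b" and h: "h \<ge> 0"
  shows "T h (integral {a..b} (\<lambda>r. T r y)) = integral {a + h..b + h} (\<lambda>r. T r y)"
proof -
  interpret Th: bounded_linear "T h" using bounded_semigroup_linear[OF sg h] .
  have "(\<lambda>r. T r y) integrable_on {a..b}"
    by (rule integrable_continuous_real, rule continuous_on_subset[OF bounded_semigroup_continuous[OF sg]])
      (use ab in auto)
  then have "T h (integral {a..b} (\<lambda>r. T r y)) = integral {a..b} (T h \<circ> (\<lambda>r. T r y))"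
    by (rule integral_linear[OF _ Th.bounded_linear, symmetric])
  also have "\<dots> = integral {a..b} ((\<lambda>r. T r y) \<circ> (+) h)"
    by (rule integral_cong) (use ab h in \<open>auto simp: bounded_semigroup_add[OF sg]\<close>)
  finally show ?thesis by (simp only: integral_shift_Icc_real)
qed

lemma is_generator_integral:
  assumes sg: "bounded_semigroup T" and gen: "is_generator T D (\<lambda>x. - A x)"
    and ab: "0 \<le> a" "a \<le> b"
  shows "integral {a..b} (\<lambda>r. T r y) \<in> D" "A (integral {a..b} (\<lambda>r. T r y)) = T a y - T b y"
proof -
  define g where "g = (\<lambda>r. T r y)"
  define w where "w = integral {a..b} g"
  define \<Phi> where "\<Phi> = (\<lambda>v. integral {0..v} g)"
  have cont: "continuous_on {0..b + 1} g"
    unfolding g_def by (rule continuous_on_subset[OF bounded_semigroup_continuous[OF sg]]) auto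
  have integral_eq: "integral {p..q} g = \<Phi> q - \<Phi> p" if "0 \<le> p" "p \<le> q" "q \<le> b + 1" for p q
  proof -
    have "g integrable_on {0..q}"
      by (rule integrable_continuous_real, rule continuous_on_subset[OF cont]) (use that in auto)
    from Henstock_Kurzweil_Integration.integral_combine[OF that(1,2) this] show ?thesis
      unfolding \<Phi>_def by (simp add: algebra_simps)
  qed
  have quotient: "((\<lambda>h. (1 / h) *\<^sub>R (\<Phi> (c + h) - \<Phi> c)) \<longlongrightarrow> g c) (at_right 0)"
    if "0 \<le> c" "c \<le> b" for c
  proof (rule has_vector_derivative_right_quotient)
    show "(\<Phi> has_vector_derivative g c) (at c within {0..b + 1})"
      unfolding \<Phi>_def by (rule integral_has_vector_derivative[OF cont]) (use that in auto)
    show "\<forall>\<^sub>F h in at_right 0. c + h \<in> {0..b + 1}"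
      using eventually_at_right_0_less[OF zero_less_one] by eventually_elim (use that in auto)
  qed
  have "eventually (\<lambda>h. (1 / h) *\<^sub>R (\<Phi> (b + h) - \<Phi> b) - (1 / h) *\<^sub>R (\<Phi> (a + h) - \<Phi> a)
      = (1 / h) *\<^sub>R (T h w - w)) (at_right 0)"
    using eventually_at_right_0_less[OF zero_less_one]
  proof eventually_elim
    case (elim h)
    then have "T h w = integral {a + h..b + h} g"
      using bounded_semigroup_integral_shift[OF sg ab, of h y] by (simp add: w_def g_def)
    also have "\<dots> = \<Phi> (b + h) - \<Phi> (a + h)" by (rule integral_eq) (use ab elim in auto)
    finally have "T h w - w = (\<Phi> (b + h) - \<Phi> b) - (\<Phi> (a + h) - \<Phi> a)"
      using integral_eq[of a b] ab by (simp add: w_def)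
    then show ?case by (simp add: scaleR_diff_right[symmetric])
  qed
  with tendsto_diff[OF quotient[of b] quotient[of a]]
  have "((\<lambda>h. (1 / h) *\<^sub>R (T h w - w)) \<longlongrightarrow> g b - g a) (at_right 0)"
    using ab by (simp add: Lim_transform_eventually)
  from is_generator_domainI[OF gen this]
  show "integral {a..b} (\<lambda>r. T r y) \<in> D" "A (integral {a..b} (\<lambda>r. T r y)) = T a y - T b y"
    by (simp_all add: w_def g_def)
qed

section \<open>Operators bounded in the graph norm\<close>

lemma graph_bounded_has_vector_derivative:
  assumes C: "graph_bounded D A C" and D: "subspace D" and A: "linear_on D A"
    and F: "\<And>v. v \<in> S \<Longrightarrow> F v \<in> D" and u: "u \<in> S" and f': "f' \<in> D"
    and dF: "(F has_vector_derivative f') (at u within S)"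
    and dAF: "((\<lambda>v. A (F v)) has_vector_derivative A f') (at u within S)"
  shows "((\<lambda>v. C (F v)) has_vector_derivative C f') (at u within S)"
proof -
  obtain c where lin: "linear_on D C"
    and bound: "\<And>x. x \<in> D \<Longrightarrow> norm (C x) \<le> c * (norm x + norm (A x))"
    using graph_boundedE[OF C] by blast
  define e where "e v = F v - F u - (v - u) *\<^sub>R f'" for v
  have e: "e v \<in> D" "A (e v) = A (F v) - A (F u) - (v - u) *\<^sub>R A f'"
    "C (e v) = C (F v) - C (F u) - (v - u) *\<^sub>R C f'" if "v \<in> S" for v
  proof -
    have "F v - F u \<in> D" "(v - u) *\<^sub>R f' \<in> D" using F[OF that] F[OF u] f' D
      by (simp_all add: subspace_diff subspace_scale)
    then show "e v \<in> D" "A (e v) = A (F v) - A (F u) - (v - u) *\<^sub>R A f'"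
      "C (e v) = C (F v) - C (F u) - (v - u) *\<^sub>R C f'"
      using F[OF that] F[OF u] f' D unfolding e_def
      by (simp_all add: subspace_diff linear_on_diff[OF A] linear_on_diff[OF lin]
          linear_on_scaleR[OF A] linear_on_scaleR[OF lin])
  qed
  let ?rF = "\<lambda>v. norm (e v) / norm (v - u)"
  let ?rA = "\<lambda>v. norm (A (e v)) / norm (v - u)"
  have "(?rF \<longlongrightarrow> 0) (at u within S)" "(?rA \<longlongrightarrow> 0) (at u within S)"
    using dF dAF e(2) unfolding has_vector_derivative_def has_derivative_iff_norm e_def
    by (auto simp: eventually_at_filter cong: Lim_cong_within)
  then have "((\<lambda>v. ?rF v + ?rA v) \<longlongrightarrow> 0) (at u within S)"
    using tendsto_add by fastforce
  then have "((\<lambda>v. norm (C (e v)) / norm (v - u)) \<longlongrightarrow> 0) (at u within S)"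
  proof (rule tendsto_0_le[where K = c])
    have "norm (C (e v)) / norm (v - u) \<le> (?rF v + ?rA v) * c" if "v \<in> S" for v
    proof -
      have "norm (C (e v)) / norm (v - u) \<le> c * (norm (e v) + norm (A (e v))) / norm (v - u)"
        by (rule divide_right_mono[OF bound[OF e(1)[OF that]]]) simp
      then show ?thesis by (simp add: add_divide_distrib algebra_simps)
    qed
    then show "\<forall>\<^sub>F v in at u within S. norm (norm (C (e v)) / norm (v - u)) \<le> norm (?rF v + ?rA v) * c"
      by (auto simp: eventually_at_filter)
  qed
  then show ?thesis
    unfolding has_vector_derivative_def has_derivative_iff_norm
    by (auto simp: e eventually_at_filter bounded_linear_scaleR_left cong: Lim_cong_within)
qed

lemma graph_bounded_integral_orbit:
  assumes sg: "bounded_semigroup T" and gen: "is_generator T D (\<lambda>x. - A x)"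
    and C: "graph_bounded D A C" and x: "x \<in> D" and ab: "0 < a" "a \<le> b"
  shows "((\<lambda>r. C (T r x)) has_integral C (integral {a..b} (\<lambda>r. T r x))) {a..b}"
proof -
  define F where "F v = integral {a..v} (\<lambda>r. T r x)" for v
  have D: "subspace D" and A: "linear_on D A" using is_generator_linear[OF sg gen] by auto
  have F: "F v \<in> D" "A (F v) = T a x - T v x" if "v \<in> {a..b}" for v
    unfolding F_def using is_generator_integral[OF sg gen] that ab by auto
  have "((\<lambda>v. C (F v)) has_vector_derivative C (T u x)) (at u within {a..b})" if u: "u \<in> {a..b}" for u
  proof (rule graph_bounded_has_vector_derivative[OF C D A])
    have "continuous_on {a..b} (\<lambda>r. T r x)"
      by (rule continuous_on_subset[OF bounded_semigroup_continuous[OF sg]]) (use ab in auto)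
    then show "(F has_vector_derivative T u x) (at u within {a..b})"
      unfolding F_def by (rule integral_has_vector_derivative[OF _ u])
    have "u > 0" using u ab by simp
    from has_vector_derivative_at_within[OF bounded_semigroup_has_vector_derivative[OF sg gen x this]]
    have "((\<lambda>v. T a x - T v x) has_vector_derivative 0 - - T u (A x)) (at u within {a..b})"
      by (rule has_vector_derivative_diff[OF has_vector_derivative_const])
    then have "((\<lambda>v. T a x - T v x) has_vector_derivative A (T u x)) (at u within {a..b})"
      using is_generator_semigroup(2)[OF sg gen x] \<open>u > 0\<close> by simp
    then show "((\<lambda>v. A (F v)) has_vector_derivative A (T u x)) (at u within {a..b})"
      by (rule has_vector_derivative_transform[rotated 2]) (use u F(2) in auto)
    show "T u x \<in> D" using is_generator_semigroup[OF sg gen x] u ab by auto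
  qed (use u F in auto)
  from fundamental_theorem_of_calculus[OF ab(2) this]
  have "((\<lambda>r. C (T r x)) has_integral C (F b) - C (F a)) {a..b}" .
  moreover have "C (F a) = 0"
    using linear_on_scaleR[OF graph_bounded_linear_on[OF C] F(1), of a 0] ab by (simp add: F_def)
  ultimately show ?thesis by (simp add: F_def)
qed

lemma graph_bounded_orbit_continuous:
  assumes sg: "bounded_semigroup T" and gen: "is_generator T D (\<lambda>x. - A x)"
    and C: "graph_bounded D A C" and x: "x \<in> D"
  shows "continuous_on {0..} (\<lambda>r. C (T r x))"
  unfolding continuous_on_def
proof
  fix r0 :: real assume r0: "r0 \<in> {0..}"
  obtain c where lin: "linear_on D C"
    and bound: "\<And>x. x \<in> D \<Longrightarrow> norm (C x) \<le> c * (norm x + norm (A x))"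
    using graph_boundedE[OF C] by blast
  have D: "subspace D" and A: "linear_on D A" using is_generator_linear[OF sg gen] by auto
  have orbit: "T r x \<in> D" "A (T r x) = T r (A x)" if "r \<in> {0..}" for r
    using is_generator_semigroup[OF sg gen x] that by auto
  have "((\<lambda>r. norm (T r y - T r0 y)) \<longlongrightarrow> 0) (at r0 within {0..})" for y
    using bounded_semigroup_continuous[OF sg] r0
    by (intro tendsto_norm_zero LIM_zero) (simp add: continuous_on_def)
  from tendsto_add[OF this this]
  have "((\<lambda>r. norm (T r x - T r0 x) + norm (T r (A x) - T r0 (A x))) \<longlongrightarrow> 0) (at r0 within {0..})"
    by simp
  then have "((\<lambda>r. C (T r x) - C (T r0 x)) \<longlongrightarrow> 0) (at r0 within {0..})"
  proof (rule tendsto_0_le[where K = c])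
    have "norm (C (T r x) - C (T r0 x)) \<le> (norm (T r x - T r0 x) + norm (T r (A x) - T r0 (A x))) * c"
      if r: "r \<in> {0..}" for r
      using bound[OF subspace_diff[OF D orbit(1)[OF r] orbit(1)[OF r0]]] orbit[OF r] orbit[OF r0]
      by (simp add: linear_on_diff[OF lin] linear_on_diff[OF A] orbit mult.commute)
    then show "\<forall>\<^sub>F r in at r0 within {0..}. norm (C (T r x) - C (T r0 x))
        \<le> norm (norm (T r x - T r0 x) + norm (T r (A x) - T r0 (A x))) * c"
      by (auto simp: eventually_at_filter)
  qed
  then show "((\<lambda>r. C (T r x)) \<longlongrightarrow> C (T r0 x)) (at r0 within {0..})"
    by (rule LIM_zero_cancel)
qed

lemma borel_measurable_output_energy:
  assumes sg: "bounded_semigroup T" and gen: "is_generator T D (\<lambda>x. - A x)"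
    and C: "graph_bounded D A C" and x: "x \<in> D"
  shows "(\<lambda>r. ennreal (indicator {0..} r * (norm (C (T r x)))\<^sup>2)) \<in> borel_measurable borel"
proof -
  have "(\<lambda>r. indicator {0..} r *\<^sub>R (norm (C (T r x)))\<^sup>2) \<in> borel_measurable borel"
    by (rule borel_measurable_continuous_on_indicator)
      (simp, intro continuous_intros graph_bounded_orbit_continuous[OF sg gen C x])
  from measurable_compose[OF this measurable_ennreal] show ?thesis by (simp add: comp_def)
qed

section \<open>The square function is dominated by the output energy\<close>

lemma increment_le_integral_output:
  fixes P :: "'a::banach \<Rightarrow> 'c::real_normed_vector"
  assumes sg: "bounded_semigroup T" and gen: "is_generator T D (\<lambda>x. - A x)"
    and inj: "inj_on A D" and C: "graph_bounded D A C"
    and R: "\<forall>v \<in> D \<inter> A ` D. norm (C (inv_into D A v)) \<ge> \<delta> * norm (P v)"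
    and x: "x \<in> D" and ab: "0 < a" "a \<le> b"
  shows "\<delta> * norm (P (T b x - T a x)) \<le> integral {a..b} (\<lambda>r. norm (C (T r x)))"
proof -
  have D: "subspace D" and A: "linear_on D A" using is_generator_linear[OF sg gen] by auto
  have lin: "linear_on D C" by (rule graph_bounded_linear_on[OF C])
  define w where "w = integral {a..b} (\<lambda>r. T r x)"
  have w: "w \<in> D" "A w = T a x - T b x"
    unfolding w_def using is_generator_integral[OF sg gen] ab by auto
  then have "- w \<in> D" "A (- w) = T b x - T a x"
    using subspace_neg[OF D] linear_on_scaleR[OF A w(1), of "- 1"] by simp_all
  moreover have "T b x - T a x \<in> D"
    using subspace_diff[OF D] is_generator_semigroup(1)[OF sg gen x] ab by simp
  ultimately have "\<delta> * norm (P (T b x - T a x)) \<le> norm (C (- w))"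
    using R inv_into_f_f[OF inj] by (metis IntI image_eqI)
  also have "\<dots> = norm (C w)"
    using linear_on_scaleR[OF lin w(1), of "- 1"] by simp
  also have "C w = integral {a..b} (\<lambda>r. C (T r x))"
    unfolding w_def using graph_bounded_integral_orbit[OF sg gen C x ab] by (rule integral_unique[symmetric])
  also have "norm \<dots> \<le> integral {a..b} (\<lambda>r. norm (C (T r x)))"
  proof (rule integral_norm_bound_integral)
    have cont: "continuous_on {a..b} (\<lambda>r. C (T r x))"
      by (rule continuous_on_subset[OF graph_bounded_orbit_continuous[OF sg gen C x]]) (use ab in auto)
    then show "(\<lambda>r. C (T r x)) integrable_on {a..b}" by (rule integrable_continuous_real)
    show "(\<lambda>r. norm (C (T r x))) integrable_on {a..b}"
      by (rule integrable_continuous_real[OF continuous_on_norm[OF cont]])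
  qed simp
  finally show ?thesis .
qed

lemma square_function_integrand_le:
  fixes P :: "'a::banach \<Rightarrow> 'c::real_normed_vector"
  assumes sg: "bounded_semigroup T" and gen: "is_generator T D (\<lambda>x. - A x)"
    and inj: "inj_on A D" and C: "graph_bounded D A C"
    and R: "\<forall>v \<in> D \<inter> A ` D. norm (C (inv_into D A v)) \<ge> \<delta> * norm (P v)"
    and \<delta>: "\<delta> > 0" and x: "x \<in> D" and t: "t > 0"
  shows "ennreal ((norm (t powr (- \<beta>) *\<^sub>R P (T (2 * t powr (2 * \<beta>)) x - T (t powr (2 * \<beta>)) x)))\<^sup>2 / t)
    \<le> ennreal (1 / t) * (\<integral>\<^sup>+ r\<in>{t powr (2 * \<beta>)..2 * t powr (2 * \<beta>)}.
          ennreal ((norm (C (T r x)))\<^sup>2 / \<delta>\<^sup>2) \<partial>lborel)"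
proof -
  define s where "s = t powr (2 * \<beta>)"
  define f where "f = (\<lambda>r. (norm (C (T r x)))\<^sup>2)"
  define I where "I = integral {s..2 * s} f"
  have s: "s > 0" using t by (simp add: s_def)
  have cont: "continuous_on {s..2 * s} (\<lambda>r. C (T r x))"
    by (rule continuous_on_subset[OF graph_bounded_orbit_continuous[OF sg gen C x]]) (use s in auto)
  have I: "(f has_integral I) {s..2 * s}"
    unfolding I_def f_def by (intro integrable_integral integrable_continuous_real continuous_intros cont)
  have "(\<delta> * norm (P (T (2 * s) x - T s x)))\<^sup>2 \<le> (integral {s..2 * s} (\<lambda>r. norm (C (T r x))))\<^sup>2"
    using increment_le_integral_output[OF sg gen inj C R x s, of "2 * s"] s \<delta> by (intro power_mono) auto
  also have "\<dots> \<le> s * I"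
    using integral_squared_le[OF continuous_on_norm[OF cont]] s by (simp add: I_def f_def)
  finally have "(norm (P (T (2 * s) x - T s x)))\<^sup>2 \<le> s * (I / \<delta>\<^sup>2)"
    using \<delta> by (simp add: field_simps)
  then have "(t powr (- \<beta>))\<^sup>2 * (norm (P (T (2 * s) x - T s x)))\<^sup>2 \<le> (t powr (- \<beta>))\<^sup>2 * s * (I / \<delta>\<^sup>2)"
    unfolding mult.assoc by (rule mult_left_mono) simp_all
  also have "(t powr (- \<beta>))\<^sup>2 * s = 1"
    using t by (simp add: s_def power2_eq_square powr_add[symmetric])
  finally have "(norm (t powr (- \<beta>) *\<^sub>R P (T (2 * s) x - T s x)))\<^sup>2 \<le> I / \<delta>\<^sup>2"
    by (simp add: power_mult_distrib)
  from divide_right_mono[OF this, of t] t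
  have "(norm (t powr (- \<beta>) *\<^sub>R P (T (2 * s) x - T s x)))\<^sup>2 / t \<le> 1 / t * (I / \<delta>\<^sup>2)"
    by (simp add: mult.commute)
  then have "ennreal ((norm (t powr (- \<beta>) *\<^sub>R P (T (2 * s) x - T s x)))\<^sup>2 / t)
      \<le> ennreal (1 / t) * ennreal (I / \<delta>\<^sup>2)"
    using t by (simp add: ennreal_mult'[symmetric] ennreal_leI del: times_divide_eq_left)
  moreover have "(\<integral>\<^sup>+ r\<in>{s..2 * s}. ennreal (f r / \<delta>\<^sup>2) \<partial>lborel) = ennreal (I / \<delta>\<^sup>2)"
    by (rule nn_integral_has_integral_lebesgue'[OF _ has_integral_divide[OF I]]) (simp add: f_def)
  ultimately show ?thesis by (simp add: s_def f_def)
qed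

lemma square_function_le_output_energy:
  fixes P :: "'a::banach \<Rightarrow> 'c::real_normed_vector"
  assumes sg: "bounded_semigroup T" and gen: "is_generator T D (\<lambda>x. - A x)"
    and inj: "inj_on A D" and C: "graph_bounded D A C"
    and R: "\<forall>v \<in> D \<inter> A ` D. norm (C (inv_into D A v)) \<ge> \<delta> * norm (P v)"
    and \<delta>: "\<delta> > 0" and \<beta>: "\<beta> > 0" and x: "x \<in> D"
  shows "(\<integral>\<^sup>+ t\<in>{0<..}. ennreal ((norm (t powr (- \<beta>) *\<^sub>R
              P (T (2 * t powr (2 * \<beta>)) x - T (t powr (2 * \<beta>)) x)))\<^sup>2 / t) \<partial>lborel)
    \<le> ennreal ((2 powr (1 / (2 * \<beta>)) - 1) / \<delta>\<^sup>2) *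
        (\<integral>\<^sup>+ r\<in>{0..}. ennreal ((norm (C (T r x)))\<^sup>2) \<partial>lborel)"
proof -
  define h where "h = (\<lambda>r. ennreal (indicator {0..} r * (norm (C (T r x)))\<^sup>2))"
  have h[measurable]: "h \<in> borel_measurable borel"
    unfolding h_def by (rule borel_measurable_output_energy[OF sg gen C x])
  have window: "(\<integral>\<^sup>+ r\<in>{t powr (2 * \<beta>)..2 * t powr (2 * \<beta>)}. ennreal ((norm (C (T r x)))\<^sup>2 / \<delta>\<^sup>2) \<partial>lborel)
      = (\<integral>\<^sup>+ r\<in>{t powr (2 * \<beta>)..2 * t powr (2 * \<beta>)}. ennreal (1 / \<delta>\<^sup>2) * h r \<partial>lborel)" for t
  proof (rule nn_integral_cong)
    fix r
    have "0 \<le> t powr (2 * \<beta>)" by simp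
    then show "ennreal ((norm (C (T r x)))\<^sup>2 / \<delta>\<^sup>2) * indicator {t powr (2 * \<beta>)..2 * t powr (2 * \<beta>)} r
        = ennreal (1 / \<delta>\<^sup>2) * h r * indicator {t powr (2 * \<beta>)..2 * t powr (2 * \<beta>)} r"
      unfolding h_def by (auto simp: indicator_def ennreal_mult'[symmetric])
  qed
  let ?G = "\<lambda>t. ennreal ((norm (t powr (- \<beta>) *\<^sub>R
              P (T (2 * t powr (2 * \<beta>)) x - T (t powr (2 * \<beta>)) x)))\<^sup>2 / t)"
  let ?W = "\<lambda>t. \<integral>\<^sup>+ r\<in>{t powr (2 * \<beta>)..2 * t powr (2 * \<beta>)}. ennreal (1 / \<delta>\<^sup>2) * h r \<partial>lborel"
  have "(\<integral>\<^sup>+ t\<in>{0<..}. ?G t \<partial>lborel) \<le> (\<integral>\<^sup>+ t\<in>{0<..}. ennreal (1 / t) * ?W t \<partial>lborel)"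
  proof (rule nn_integral_mono)
    fix t :: real
    show "?G t * indicator {0<..} t \<le> ennreal (1 / t) * ?W t * indicator {0<..} t"
    proof (cases "t > 0")
      case True
      have "?G t \<le> ennreal (1 / t) * ?W t"
        using square_function_integrand_le[OF sg gen inj C R \<delta> x True, where \<beta> = \<beta>]
        unfolding window .
      then show ?thesis using True by simp
    qed simp
  qed
  also have "\<dots> \<le> ennreal (2 powr (1 / (2 * \<beta>)) - 1) * (\<integral>\<^sup>+ r. ennreal (1 / \<delta>\<^sup>2) * h r \<partial>lborel)"
    using \<beta> by (intro nn_integral_window_average_le) auto
  also have "\<dots> = ennreal ((2 powr (1 / (2 * \<beta>)) - 1) / \<delta>\<^sup>2) * (\<integral>\<^sup>+ r. h r \<partial>lborel)"
  proof -
    have "0 \<le> 2 powr (1 / (2 * \<beta>)) - (1::real)" using \<beta> by (simp add: ge_one_powr_ge_zero)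
    then have "ennreal (2 powr (1 / (2 * \<beta>)) - 1) * ennreal (1 / \<delta>\<^sup>2)
        = ennreal ((2 powr (1 / (2 * \<beta>)) - 1) / \<delta>\<^sup>2)"
      by (simp add: ennreal_mult'[symmetric])
    then show ?thesis by (simp add: nn_integral_cmult mult.assoc[symmetric])
  qed
  also have "(\<integral>\<^sup>+ r. h r \<partial>lborel) = (\<integral>\<^sup>+ r\<in>{0..}. ennreal ((norm (C (T r x)))\<^sup>2) \<partial>lborel)"
    by (rule nn_integral_cong) (simp add: h_def indicator_def)
  finally show ?thesis .
qed

theorem theorem4p3:
  fixes T :: "real \<Rightarrow> 'a::banach \<Rightarrow> 'a"
    and D :: "'a set"
    and A :: "'a \<Rightarrow> 'a"
    and C :: "'a \<Rightarrow> 'b::banach"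
    and \<beta> K \<delta> :: real
  assumes sg: "bounded_semigroup T"
    and gen: "is_generator T D (\<lambda>x. - A x)"
    and inj: "inj_on A D"
    and dense: "closure (A ` D) = UNIV"
    and Cb: "graph_bounded D A C"
    and beta: "0 < \<beta>" "\<beta> < 1"
    and Kpos: "K > 0" and dpos: "\<delta> > 0"
    and SQ: "\<forall>x. ennreal ((norm x)\<^sup>2) \<le> ennreal (K\<^sup>2) *
              (\<integral>\<^sup>+ t\<in>{0<..}. ennreal ((norm ((t powr (- \<beta>)) *\<^sub>R
                  frac_neg_pow T \<beta> (T (2 * t powr (2 * \<beta>)) x - T (t powr (2 * \<beta>)) x)))\<^sup>2 / t)
               \<partial>lborel)"
    and R: "\<forall>x \<in> D \<inter> A ` D. norm (C (inv_into D A x)) \<ge> \<delta> * norm (frac_neg_pow T \<beta> x)"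
  shows "\<exists>m>0. \<forall>x \<in> D \<inter> A ` D.
           ennreal (m\<^sup>2 * (norm x)\<^sup>2) \<le> (\<integral>\<^sup>+ t\<in>{0..}. ennreal ((norm (C (T t x)))\<^sup>2) \<partial>lborel)"
proof -
  define B where "B = 2 powr (1 / (2 * \<beta>)) - 1"
  define m where "m = \<delta> / (K * sqrt B)"
  have "B > 0" using beta by (simp add: B_def)
  then have m: "m > 0" and m_K_B: "m\<^sup>2 * (K\<^sup>2 * (B / \<delta>\<^sup>2)) = 1"
    using Kpos dpos by (simp_all add: m_def power_divide power_mult_distrib)
  show ?thesis
  proof (intro exI[of _ m] conjI ballI m)
    fix x assume "x \<in> D \<inter> A ` D"
    then have x: "x \<in> D" by blast
    let ?E = "\<integral>\<^sup>+ t\<in>{0..}. ennreal ((norm (C (T t x)))\<^sup>2) \<partial>lborel"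
    have "ennreal ((norm x)\<^sup>2) \<le> ennreal (K\<^sup>2) * (ennreal (B / \<delta>\<^sup>2) * ?E)"
      using SQ square_function_le_output_energy[OF sg gen inj Cb R dpos beta(1) x]
      unfolding B_def by (meson order_trans mult_left_mono zero_le)
    then have "ennreal (m\<^sup>2) * ennreal ((norm x)\<^sup>2)
        \<le> ennreal (m\<^sup>2) * ennreal (K\<^sup>2) * ennreal (B / \<delta>\<^sup>2) * ?E"
      by (simp add: mult_left_mono mult.assoc)
    also have "ennreal (m\<^sup>2) * ennreal (K\<^sup>2) * ennreal (B / \<delta>\<^sup>2) = 1"
      using m_K_B by (metis ennreal_1 ennreal_mult' mult.assoc zero_le_power2)
    finally show "ennreal (m\<^sup>2 * (norm x)\<^sup>2) \<le> ?E"
      by (simp add: ennreal_mult')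
  qed
qed

end
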